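(* Let $f:\mathbb{C}^2\to\mathbb{C}$ be a convenient mixed polynomial that is strongly Newton non-degenerate in Oka's sense. Then $f$ has a strongly Newton inner non-degenerate boundary.
   Context: Mixed polynomials: $f=\sum c_{\nu,\mu}z^\nu\bar z^\mu$ with $z=(u,v)\in\mathbb{C}^2$, $z^\nu=u^{\nu_1}v^{\nu_2}$, $\bar z^\mu=\bar u^{\mu_1}\bar v^{\mu_2}$, regarded as a real map $\mathbb{R}^4\to\mathbb{R}^2$. $\Sigma_f$ (the critical points) is the common zero set of $f_u\overline{f_{\bar v}}-\overline{f_{\bar u}}f_v$, $|f_u|^2-|f_{\bar u}|^2$, $|f_v|^2-|f_{\bar v}|^2$ (Wirtinger derivatives), equivalently where the real Jacobian has rank $<2$. $(\mathbb{C}^* )^2=(\mathbb{C}\setminus\{0\})^2$. Newton data: $\mathrm{supp}(f)=\{\nu+\mu:c_{\nu,\mu}\ne0\}$; $\Gamma_+(f)$ = convex hull of $\bigcup_{w\in\mathrm{supp}(f)}(w+\mathbb{R}^2_{\ge0})$, with $N\ge1$ compact 1-faces; $\Gamma(f)$ = lattice points on compact faces. $f$ is convenient if $\Gamma(f)$ meets both coordinate axes. For a compact face $\Delta$ (vertex or edge), $f_\Delta$ = sum of terms with $\nu+\mu\in\Delta$. Compact 1-faces $\Delta(P_1),\dots,\Delta(P_N)$, $P_i=(p_{i,1},p_{i,2})$ primitive positive weight vector orthogonal to the edge, ordered so $p_{i,1}/p_{i,2}$ strictly decreases; $f_{P_i}:=f_{\Delta(P_i)}$. A vertex is extreme if on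 exactly one compact 1-face, non-extreme if on two. $f$ is strongly Newton non-degenerate (Oka) if $\Sigma_{f_\Delta}\cap(\mathbb{C}^* )^2=\emptyset$ for every compact face $\Delta$ (vertices and edges). $f$ has a strongly Newton inner non-degenerate boundary if (i) $f_{P_1}$ has no critical points in $\mathbb{C}^2\setminus\{v=0\}$ and $f_{P_N}$ none in $\mathbb{C}^2\setminus\{u=0\}$; (ii) for each compact 1-face and non-extreme vertex $\Delta$, $f_\Delta$ has no critical points in $(\mathbb{C}^* )^2$. *)

theory Defs
  imports "HOL-Analysis.Analysis"
begin

text \<open>A mixed polynomial in z = (u,v): coefficient function indexed by
  (nu, mu) = ((nu1,nu2),(mu1,mu2)); the term is c * u^nu1 v^nu2 conj(u)^mu1 conj(v)^mu2.
  Finiteness of the support is assumed separately.\<close>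

type_synonym mpoly = "(nat \<times> nat) \<times> (nat \<times> nat) \<Rightarrow> complex"

definition mp_eval :: "mpoly \<Rightarrow> complex \<times> complex \<Rightarrow> complex" where
  "mp_eval f z = (\<Sum>k\<in>{k. f k \<noteq> 0}.
      f k * fst z ^ fst (fst k) * snd z ^ snd (fst k)
          * cnj (fst z) ^ fst (snd k) * cnj (snd z) ^ snd (snd k))"

definition mp_du :: "mpoly \<Rightarrow> mpoly" where
  "mp_du f = (\<lambda>((a,b),m). of_nat (a+1) * f ((a+1,b),m))"
definition mp_dv :: "mpoly \<Rightarrow> mpoly" where
  "mp_dv f = (\<lambda>((a,b),m). of_nat (b+1) * f ((a,b+1),m))"
definition mp_dubar :: "mpoly \<Rightarrow> mpoly" where
  "mp_dubar f = (\<lambda>(n,(d,e)). of_nat (d+1) * f (n,(d+1,e)))"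
definition mp_dvbar :: "mpoly \<Rightarrow> mpoly" where
  "mp_dvbar f = (\<lambda>(n,(d,e)). of_nat (e+1) * f (n,(d,e+1)))"

definition crit :: "mpoly \<Rightarrow> (complex \<times> complex) set" where
  "crit f = {z.
     mp_eval (mp_du f) z * cnj (mp_eval (mp_dvbar f) z)
       - cnj (mp_eval (mp_dubar f) z) * mp_eval (mp_dv f) z = 0
   \<and> (cmod (mp_eval (mp_du f) z))\<^sup>2 - (cmod (mp_eval (mp_dubar f) z))\<^sup>2 = 0
   \<and> (cmod (mp_eval (mp_dv f) z))\<^sup>2 - (cmod (mp_eval (mp_dvbar f) z))\<^sup>2 = 0}"

definition torus2 :: "(complex \<times> complex) set" where
  "torus2 = {z. fst z \<noteq> 0 \<and> snd z \<noteq> 0}"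

definition supp :: "mpoly \<Rightarrow> (nat \<times> nat) set" where
  "supp f = {(fst (fst k) + fst (snd k), snd (fst k) + snd (snd k)) | k. f k \<noteq> 0}"

definition newton_plus :: "mpoly \<Rightarrow> (real \<times> real) set" where
  "newton_plus f = convex hull
     (\<Union>w\<in>supp f. {x. real (fst w) \<le> fst x \<and> real (snd w) \<le> snd x})"

definition weight :: "nat \<times> nat \<Rightarrow> bool" where
  "weight P \<longleftrightarrow> fst P > 0 \<and> snd P > 0 \<and> coprime (fst P) (snd P)"

definition wdot :: "nat \<times> nat \<Rightarrow> real \<times> real \<Rightarrow> real" where
  "wdot P x = real (fst P) * fst x + real (snd P) * snd x"

definition face :: "mpoly \<Rightarrow> nat \<times> nat \<Rightarrow> (real \<times> real) set" where
  "face f P = {x \<in> newton_plus f. \<forall>y\<in>newton_plus f. wdot P x \<le> wdot P y}"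

text \<open>Compact faces of Gamma_+ are the faces Delta(P), P positive weight.\<close>
definition compact_face :: "mpoly \<Rightarrow> (real \<times> real) set \<Rightarrow> bool" where
  "compact_face f D \<longleftrightarrow> (\<exists>P. weight P \<and> D = face f P \<and> D \<noteq> {})"

definition edge_weight :: "mpoly \<Rightarrow> nat \<times> nat \<Rightarrow> bool" where
  "edge_weight f P \<longleftrightarrow> weight P \<and> (\<exists>x\<in>face f P. \<exists>y\<in>face f P. x \<noteq> y)"

definition first_edge :: "mpoly \<Rightarrow> nat \<times> nat \<Rightarrow> bool" where
  "first_edge f P \<longleftrightarrow> edge_weight f P \<and>
     (\<forall>Q. edge_weight f Q \<longrightarrow> real (fst Q) / real (snd Q) \<le> real (fst P) / real (snd P))"

definition last_edge :: "mpoly \<Rightarrow> nat \<times> nat \<Rightarrow> bool" where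
  "last_edge f P \<longleftrightarrow> edge_weight f P \<and>
     (\<forall>Q. edge_weight f Q \<longrightarrow> real (fst P) / real (snd P) \<le> real (fst Q) / real (snd Q))"

definition nonextreme_vertex :: "mpoly \<Rightarrow> real \<times> real \<Rightarrow> bool" where
  "nonextreme_vertex f w \<longleftrightarrow> (\<exists>P Q. edge_weight f P \<and> edge_weight f Q \<and> P \<noteq> Q
      \<and> w \<in> face f P \<and> w \<in> face f Q)"

definition restr :: "mpoly \<Rightarrow> (real \<times> real) set \<Rightarrow> mpoly" where
  "restr f D = (\<lambda>k. if (real (fst (fst k) + fst (snd k)), real (snd (fst k) + snd (snd k))) \<in> D
                    then f k else 0)"

definition convenient :: "mpoly \<Rightarrow> bool" where
  "convenient f \<longleftrightarrow>
     (\<exists>D a. compact_face f D \<and> (real a, 0) \<in> D) \<and> (\<exists>D b. compact_face f D \<and> (0, real b) \<in> D)"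

definition strongly_newton_nondeg :: "mpoly \<Rightarrow> bool" where
  "strongly_newton_nondeg f \<longleftrightarrow>
     (\<forall>D. compact_face f D \<longrightarrow> crit (restr f D) \<inter> torus2 = {})"

definition strongly_inner_nondeg_boundary :: "mpoly \<Rightarrow> bool" where
  "strongly_inner_nondeg_boundary f \<longleftrightarrow>
     (\<forall>P. first_edge f P \<longrightarrow> crit (restr f (face f P)) \<inter> {z. snd z \<noteq> 0} = {})
   \<and> (\<forall>P. last_edge f P \<longrightarrow> crit (restr f (face f P)) \<inter> {z. fst z \<noteq> 0} = {})
   \<and> (\<forall>P. edge_weight f P \<longrightarrow> crit (restr f (face f P)) \<inter> torus2 = {})
   \<and> (\<forall>w. nonextreme_vertex f w \<longrightarrow> crit (restr f {w}) \<inter> torus2 = {})"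

end

theory Submission
  imports Defs
begin

(* Edges and non-extreme vertices of the Newton boundary are compact faces, so Oka's condition
   already excludes critical points of their face functions in the torus. It remains to exclude
   critical points (0, v), v \<noteq> 0, of f_{P_1}. By convenience Gamma(f) has a vertex (0, b) on the
   v-axis, and the steepest edge Delta(P_1) passes through it. At u = 0 only the u-free terms of
   f_{P_1} contribute to its v- and conj(v)-derivatives, and these terms form the vertex function
   f_{(0,b)}, which does not depend on u. Hence (1, v) is a critical point of f_{(0,b)} in the torus,
   contradicting Oka's condition at that vertex. The last edge is the first edge of f with u and v
   exchanged. *)

section \<open>Faces of the Newton polygon\<close>

lemma wdot_eq_inner: "wdot P x = inner (map_prod real real P) x"
  by (cases P; cases x) (simp add: wdot_def)

lemma convex_wdot_ge: "convex {x. c \<le> wdot P x}"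
  using convex_halfspace_ge[of c "map_prod real real P"] by (simp add: wdot_eq_inner)

lemma supp_in_newton_plus: "w \<in> supp f \<Longrightarrow> map_prod real real w \<in> newton_plus f"
  unfolding newton_plus_def
  by (rule hull_inc) (auto intro: bexI[of _ w] simp: map_prod_def split: prod.splits)

lemma newton_plus_wdot_ge:
  assumes "\<forall>w\<in>supp f. c \<le> wdot P (map_prod real real w)" and "y \<in> newton_plus f"
  shows "c \<le> wdot P y"
proof -
  have "newton_plus f \<subseteq> {y. c \<le> wdot P y}"
    unfolding newton_plus_def
  proof (intro hull_minimal convex_wdot_ge subsetI, safe)
    fix w x assume "w \<in> supp f" "real (fst w) \<le> fst x" "real (snd w) \<le> snd x"
    moreover from this have "wdot P (map_prod real real w) \<le> wdot P x"
      by (cases w) (auto simp: wdot_def intro!: add_mono mult_left_mono)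
    ultimately show "c \<le> wdot P x" using assms(1) by force
  qed
  with assms(2) show ?thesis by blast
qed

lemma mem_faceI:
  assumes "s \<in> newton_plus f" and "\<forall>w\<in>supp f. wdot P s \<le> wdot P (map_prod real real w)"
  shows "s \<in> face f P"
  using assms newton_plus_wdot_ge[of f "wdot P s" P] unfolding face_def by blast

lemma newton_plus_nonneg:
  assumes "x \<in> newton_plus f"
  shows "0 \<le> fst x" and "0 \<le> snd x"
  using newton_plus_wdot_ge[OF _ assms, of 0 "(1, 0)"] newton_plus_wdot_ge[OF _ assms, of 0 "(0, 1)"]
  by (simp_all add: wdot_def)

lemma finite_supp:
  assumes "finite {k. f k \<noteq> 0}"
  shows "finite (supp f)"
proof -
  have "supp f = (\<lambda>(n, m). (fst n + fst m, snd n + snd m)) ` {k. f k \<noteq> 0}"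
    unfolding supp_def by force
  with assms show ?thesis by simp
qed

lemma face_primitive_weight:
  assumes "0 < fst q" and "0 < snd q"
  obtains R where "weight R" and "face f R = face f q"
    and "real (fst R) / real (snd R) = real (fst q) / real (snd q)"
proof -
  define g where "g = gcd (fst q) (snd q)"
  define R where "R = (fst q div g, snd q div g)"
  have g: "0 < g" using assms g_def by simp
  have q: "fst q = g * fst R" "snd q = g * snd R" unfolding R_def g_def by simp_all
  have "coprime (fst R) (snd R)"
    unfolding R_def g_def using assms by (simp add: div_gcd_coprime)
  then have "weight R"
    unfolding weight_def using assms q by (metis gr0I mult_0_right)
  moreover have "face f R = face f q"
  proof -
    have "wdot q x = real g * wdot R x" for x
      unfolding wdot_def using q by (simp add: algebra_simps)
    then show ?thesis unfolding face_def using g by auto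
  qed
  moreover have "real (fst R) / real (snd R) = real (fst q) / real (snd q)"
    using g q by simp
  ultimately show ?thesis using that by blast
qed

lemma wdot_face_eq:
  assumes "x \<in> face f P" and "y \<in> face f P"
  shows "wdot P x = wdot P y"
  using assms unfolding face_def by (auto intro: order.antisym)

lemma weights_not_parallel:
  assumes "weight P" and "weight Q" and "P \<noteq> Q"
  shows "fst P * snd Q \<noteq> snd P * fst Q"
proof
  assume e: "fst P * snd Q = snd P * fst Q"
  have cop: "coprime (fst P) (snd P)" "coprime (fst Q) (snd Q)"
    using assms unfolding weight_def by auto
  have "fst P dvd fst Q" using e cop(1)
    by (metis coprime_dvd_mult_right_iff dvd_triv_left mult.commute)
  moreover have "fst Q dvd fst P" using e cop(2)
    by (metis coprime_dvd_mult_right_iff dvd_triv_left mult.commute)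
  ultimately have "fst P = fst Q" by (rule dvd_antisym)
  moreover from this have "snd P = snd Q" using e assms(1) unfolding weight_def by simp
  ultimately show False using assms(3) by (simp add: prod_eq_iff)
qed

lemma face_meet_is_vertex:
  assumes "weight P" and "weight Q" and "P \<noteq> Q"
    and wP: "w \<in> face f P" and wQ: "w \<in> face f Q"
  obtains R where "weight R" and "face f R = {w}"
proof -
  define S where "S = (fst P + fst Q, snd P + snd Q)"
  have wdot_S: "wdot S x = wdot P x + wdot Q x" for x
    unfolding S_def wdot_def by (simp add: algebra_simps)
  have "x = w" if x: "x \<in> face f S" for x
  proof -
    have "x \<in> newton_plus f" "w \<in> newton_plus f" using x wP unfolding face_def by auto
    then have "wdot S x \<le> wdot S w" "wdot P w \<le> wdot P x" "wdot Q w \<le> wdot Q x"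
      using x wP wQ unfolding face_def by auto
    then have "wdot P (x - w) = 0" "wdot Q (x - w) = 0"
      unfolding wdot_S by (auto simp: wdot_def algebra_simps)
    then have "real (fst P * snd Q) * fst (x - w) = real (snd P * fst Q) * fst (x - w)"
      "real (fst P * snd Q) * snd (x - w) = real (snd P * fst Q) * snd (x - w)"
      unfolding wdot_def of_nat_mult by algebra+
    moreover have "real (fst P * snd Q) \<noteq> real (snd P * fst Q)"
      using weights_not_parallel[OF assms(1-3)] by linarith
    ultimately show "x = w" by (simp add: prod_eq_iff del: of_nat_mult)
  qed
  moreover have "w \<in> face f S"
    using wP wQ unfolding face_def by (auto simp: wdot_S intro: add_mono)
  ultimately have "face f S = {w}" by blast
  moreover have "0 < fst S" "0 < snd S" using assms(1) unfolding S_def weight_def by auto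
  ultimately show ?thesis using face_primitive_weight that by metis
qed

definition v_axis_vertex :: "mpoly \<Rightarrow> nat \<Rightarrow> bool" where
  "v_axis_vertex f b \<longleftrightarrow> (0, b) \<in> supp f \<and> (\<forall>y. (0, y) \<in> supp f \<longrightarrow> b \<le> y)"

lemma v_axis_vertex_exists:
  assumes "(0, y) \<in> newton_plus f"
  obtains b where "v_axis_vertex f b"
proof -
  have "\<exists>b. (0, b) \<in> supp f"
  proof (rule ccontr)
    assume "\<nexists>b. (0, b) \<in> supp f"
    then have "\<forall>w\<in>supp f. 1 \<le> wdot (1, 0) (map_prod real real w)"
      by (auto simp: wdot_def Suc_le_eq intro: gr0I)
    from newton_plus_wdot_ge[OF this assms] show False by (simp add: wdot_def)
  qed
  then have "v_axis_vertex f (LEAST b. (0, b) \<in> supp f)"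
    unfolding v_axis_vertex_def by (auto intro: LeastI_ex Least_le)
  then show ?thesis by (rule that)
qed

lemma v_axis_vertex_wdot_le:
  assumes "v_axis_vertex f b" and "b \<le> a" and "w \<in> supp f"
  shows "real b \<le> wdot (a, 1) (map_prod real real w)"
proof -
  have "b \<le> a * fst w + snd w"
  proof (cases "fst w = 0")
    case True
    with assms show ?thesis unfolding v_axis_vertex_def by (metis add_0 mult_0_right prod.collapse)
  next
    case False
    then have "a \<le> a * fst w" by simp
    with assms(2) show ?thesis by linarith
  qed
  then show ?thesis unfolding wdot_def by (simp flip: of_nat_mult of_nat_add)
qed

lemma face_v_axis_vertex:
  assumes "v_axis_vertex f b"
  shows "face f (Suc b, 1) = {(0, real b)}"
proof
  have "(0, real b) \<in> newton_plus f"
    using assms supp_in_newton_plus unfolding v_axis_vertex_def by fastforce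
  moreover have "\<forall>w\<in>supp f. wdot (Suc b, 1) (0, real b) \<le> wdot (Suc b, 1) (map_prod real real w)"
    using v_axis_vertex_wdot_le[OF assms, of "Suc b"] by (simp add: wdot_def)
  ultimately show "{(0, real b)} \<subseteq> face f (Suc b, 1)" by (simp add: mem_faceI)
  show "face f (Suc b, 1) \<subseteq> {(0, real b)}"
  proof
    fix x assume x: "x \<in> face f (Suc b, 1)"
    with \<open>(0, real b) \<in> newton_plus f\<close> have x_np: "x \<in> newton_plus f"
      and upper: "wdot (Suc b, 1) x \<le> wdot (Suc b, 1) (0, real b)" unfolding face_def by auto
    have lower: "real b \<le> wdot (b, 1) x"
      using newton_plus_wdot_ge[OF _ x_np] v_axis_vertex_wdot_le[OF assms order.refl] by blast
    have "fst x = 0"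
      using upper lower newton_plus_nonneg(1)[OF x_np] by (simp add: wdot_def algebra_simps)
    moreover from this have "snd x = real b" using upper lower by (simp add: wdot_def)
    ultimately show "x \<in> {(0, real b)}" by (simp add: prod_eq_iff)
  qed
qed

lemma compact_face_v_axis_vertex:
  assumes "v_axis_vertex f b"
  shows "compact_face f {(0, real b)}"
proof -
  have "weight (Suc b, 1)" by (simp add: weight_def)
  with face_v_axis_vertex[OF assms] show ?thesis unfolding compact_face_def by blast
qed

lemma steeper_edge_through_v_axis_vertex:
  assumes fin: "finite (supp f)" and b: "v_axis_vertex f b"
    and w: "w \<in> supp f" "0 < fst w"
    and t: "0 \<le> t" "t < (real b - real (snd w)) / real (fst w)"
  obtains R where "edge_weight f R" and "t < real (fst R) / real (snd R)"
proof -
  define S where "S = {v \<in> supp f. 0 < fst v}"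
  define slope where "slope v = (real b - real (snd v)) / real (fst v)" for v :: "nat \<times> nat"
  have "finite S" "w \<in> S" using fin w unfolding S_def by auto
  then have "Max (slope ` S) \<in> slope ` S" by (intro Max_in) auto
  then obtain s where s: "s \<in> S" and s_Max: "slope s = Max (slope ` S)" by auto
  have s_max: "slope v \<le> slope s" if "v \<in> S" for v
    using s_Max \<open>finite S\<close> that by simp
  have s_supp: "s \<in> supp f" and s1: "0 < fst s" using s unfolding S_def by auto
  have "t < slope s" using t(2) s_max[OF \<open>w \<in> S\<close>] by (simp add: slope_def)
  then have s2: "snd s < b"
    using t(1) s1 unfolding slope_def by (smt (verit) divide_nonpos_pos of_nat_0_less_iff of_nat_less_iff)
  \<comment> \<open>The supporting line through (0,b) and the point s of maximal slope.\<close>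
  define q where "q = (b - snd s, fst s)"
  have q: "real (fst q) = real b - real (snd s)" "real (snd q) = real (fst s)"
    unfolding q_def using s2 by simp_all
  have bound: "real (fst s) * real b \<le> wdot q (map_prod real real v)" if v: "v \<in> supp f" for v
  proof (cases "fst v = 0")
    case True
    then have "b \<le> snd v" using b v unfolding v_axis_vertex_def by (metis prod.collapse)
    then show ?thesis using True q by (simp add: wdot_def mult_left_mono)
  next
    case False
    then have "slope v \<le> slope s" using v s_max unfolding S_def by simp
    then have "(real b - real (snd v)) * real (fst s) \<le> (real b - real (snd s)) * real (fst v)"
      unfolding slope_def using False s1 by (simp add: field_simps)
    then show ?thesis unfolding wdot_def q by (simp add: algebra_simps)
  qed
  have on_line: "wdot q (0, real b) = real (fst s) * real b"
    "wdot q (map_prod real real s) = real (fst s) * real b"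
    unfolding wdot_def q by (simp_all add: algebra_simps)
  have "(0, real b) \<in> newton_plus f" "map_prod real real s \<in> newton_plus f"
    using supp_in_newton_plus[of "(0, b)" f] supp_in_newton_plus[OF s_supp] b
    unfolding v_axis_vertex_def by auto
  then have "(0, real b) \<in> face f q" "map_prod real real s \<in> face f q"
    using bound by (auto intro!: mem_faceI simp: on_line)
  moreover have "(0, real b) \<noteq> map_prod real real s" using s1 by (cases s) simp
  moreover obtain R where "weight R" "face f R = face f q"
    and "real (fst R) / real (snd R) = real (fst q) / real (snd q)"
    using face_primitive_weight[of q f] s1 s2 unfolding q_def by auto
  moreover have "real (fst q) / real (snd q) = slope s" unfolding slope_def q ..
  ultimately show ?thesis using that \<open>t < slope s\<close> unfolding edge_weight_def by metis
qed

lemma first_edge_meets_v_axis: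
  assumes fin: "finite (supp f)" and P: "first_edge f P" and b: "v_axis_vertex f b"
  shows "face f P \<inter> {x. fst x = 0} = {(0, real b)}"
proof -
  have "weight P" using P unfolding first_edge_def edge_weight_def by blast
  then have p: "0 < fst P" "0 < snd P" unfolding weight_def by auto
  have b_np: "(0, real b) \<in> newton_plus f"
    using supp_in_newton_plus[of "(0, b)" f] b unfolding v_axis_vertex_def by auto
  have b_face: "(0, real b) \<in> face f P"
  proof (rule ccontr)
    assume "(0, real b) \<notin> face f P"
    then obtain w where w: "w \<in> supp f" and below: "wdot P (map_prod real real w) < wdot P (0, real b)"
      using mem_faceI[OF b_np, of P] by (meson not_le)
    have w1: "0 < fst w"
    proof (rule ccontr)
      assume "\<not> 0 < fst w"
      then have "fst w = 0" "b \<le> snd w"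
        using b w unfolding v_axis_vertex_def by (metis gr0I prod.collapse)+
      moreover have "real (snd P) * real b \<le> real (snd P) * real (snd w)"
        using \<open>b \<le> snd w\<close> by (simp add: mult_left_mono)
      ultimately show False using below by (simp add: wdot_def)
    qed
    have "real (fst P) * real (fst w) < real (snd P) * (real b - real (snd w))"
      using below by (simp add: wdot_def algebra_simps)
    then have "real (fst P) / real (snd P) < (real b - real (snd w)) / real (fst w)"
      using p w1 by (simp add: field_simps)
    with steeper_edge_through_v_axis_vertex[OF fin b w w1] obtain R
      where "edge_weight f R" "real (fst P) / real (snd P) < real (fst R) / real (snd R)"
      by (metis divide_nonneg_nonneg of_nat_0_le_iff)
    then show False using P unfolding first_edge_def by (meson not_le)
  qed
  have unique: "x = (0, real b)" if "x \<in> face f P" "fst x = 0" for x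
  proof -
    have "real (snd P) * snd x = real (snd P) * real b"
      using wdot_face_eq[OF that(1) b_face] that(2) by (simp add: wdot_def)
    then show ?thesis using p that(2) by (simp add: prod_eq_iff)
  qed
  show ?thesis
  proof (intro equalityI subsetI)
    show "x \<in> {(0, real b)}" if "x \<in> face f P \<inter> {x. fst x = 0}" for x
      using unique that by blast
  qed (use b_face in simp)
qed

section \<open>The u-free part of a mixed polynomial\<close>

definition mp_term :: "mpoly \<Rightarrow> complex \<times> complex \<Rightarrow> (nat \<times> nat) \<times> (nat \<times> nat) \<Rightarrow> complex" where
  "mp_term g z k = g k * fst z ^ fst (fst k) * snd z ^ snd (fst k)
     * cnj (fst z) ^ fst (snd k) * cnj (snd z) ^ snd (snd k)"

lemma mp_eval_eq_sum:
  assumes "finite A" and "{k. g k \<noteq> 0} \<subseteq> A"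
  shows "mp_eval g z = (\<Sum>k\<in>A. mp_term g z k)"
  unfolding mp_eval_def mp_term_def using assms by (intro sum.mono_neutral_left) auto

lemma finite_support_mp_dv:
  assumes "finite {k. g k \<noteq> 0}"
  shows "finite {k. mp_dv g k \<noteq> 0}"
proof -
  let ?shift = "\<lambda>((a, b), m). ((a, Suc b), m) :: (nat \<times> nat) \<times> nat \<times> nat"
  have "inj ?shift" by (auto simp: inj_def)
  moreover have "{k. mp_dv g k \<noteq> 0} \<subseteq> ?shift -` {k. g k \<noteq> 0}"
    by (auto simp: mp_dv_def split: prod.splits)
  ultimately show ?thesis using assms by (meson finite_subset finite_vimageI)
qed

lemma finite_support_mp_dvbar:
  assumes "finite {k. g k \<noteq> 0}"
  shows "finite {k. mp_dvbar g k \<noteq> 0}"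
proof -
  let ?shift = "\<lambda>(n, (d, e)). (n, (d, Suc e)) :: (nat \<times> nat) \<times> nat \<times> nat"
  have "inj ?shift" by (auto simp: inj_def)
  moreover have "{k. mp_dvbar g k \<noteq> 0} \<subseteq> ?shift -` {k. g k \<noteq> 0}"
    by (auto simp: mp_dvbar_def split: prod.splits)
  ultimately show ?thesis using assms by (meson finite_subset finite_vimageI)
qed

lemma mp_eval_zero: "mp_eval (\<lambda>_. 0) z = 0"
  by (simp add: mp_eval_def)

lemma finite_support_restr: "finite {k. f k \<noteq> 0} \<Longrightarrow> finite {k. restr f D k \<noteq> 0}"
  by (rule finite_subset[of _ "{k. f k \<noteq> 0}"]) (auto simp: restr_def)

definition u_free_part :: "mpoly \<Rightarrow> mpoly" where
  "u_free_part g k = (if fst (fst k) = 0 \<and> fst (snd k) = 0 then g k else 0)"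

lemma mp_eval_u_free_part:
  assumes "finite {k. g k \<noteq> 0}"
  shows "mp_eval (u_free_part g) (w, v) = mp_eval g (0, v)"
proof -
  let ?A = "{k. g k \<noteq> 0}"
  have "mp_eval (u_free_part g) (w, v) = (\<Sum>k\<in>?A. mp_term (u_free_part g) (w, v) k)"
    using assms by (intro mp_eval_eq_sum) (auto simp: u_free_part_def split: if_splits)
  also have "\<dots> = (\<Sum>k\<in>?A. mp_term g (0, v) k)"
    by (intro sum.cong) (auto simp: mp_term_def u_free_part_def)
  also have "\<dots> = mp_eval g (0, v)"
    using assms by (intro mp_eval_eq_sum[symmetric]) auto
  finally show ?thesis .
qed

lemma mp_du_u_free_part: "mp_du (u_free_part g) = (\<lambda>_. 0)"
  by (auto simp: fun_eq_iff mp_du_def u_free_part_def)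

lemma mp_dubar_u_free_part: "mp_dubar (u_free_part g) = (\<lambda>_. 0)"
  by (auto simp: fun_eq_iff mp_dubar_def u_free_part_def)

lemma mp_dv_u_free_part: "mp_dv (u_free_part g) = u_free_part (mp_dv g)"
  by (auto simp: fun_eq_iff mp_dv_def u_free_part_def)

lemma mp_dvbar_u_free_part: "mp_dvbar (u_free_part g) = u_free_part (mp_dvbar g)"
  by (auto simp: fun_eq_iff mp_dvbar_def u_free_part_def)

lemma crit_u_free_part:
  assumes "finite {k. g k \<noteq> 0}" and "(0, v) \<in> crit g"
  shows "(w, v) \<in> crit (u_free_part g)"
  using assms(2)
  by (simp add: crit_def mp_eval_zero mp_du_u_free_part mp_dubar_u_free_part
      mp_dv_u_free_part mp_dvbar_u_free_part mp_eval_u_free_part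
      finite_support_mp_dv[OF assms(1)] finite_support_mp_dvbar[OF assms(1)])

lemma u_free_part_restr: "u_free_part (restr f D) = restr f (D \<inter> {x. fst x = 0})"
  by (auto simp: fun_eq_iff u_free_part_def restr_def)

section \<open>Exchanging the variables\<close>

definition swap_vars :: "mpoly \<Rightarrow> mpoly" where
  "swap_vars f = f \<circ> map_prod prod.swap prod.swap"

lemma finite_support_swap_vars:
  assumes "finite {k. f k \<noteq> 0}"
  shows "finite {k. swap_vars f k \<noteq> 0}"
proof -
  have "inj (map_prod prod.swap prod.swap :: (nat \<times> nat) \<times> nat \<times> nat \<Rightarrow> _)"
    by (intro injI) auto
  from finite_vimageI[OF assms this] show ?thesis
    by (simp add: swap_vars_def vimage_def)
qed

lemma mp_eval_swap_vars: "mp_eval (swap_vars g) z = mp_eval g (prod.swap z)"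
  unfolding mp_eval_def swap_vars_def
  by (rule sum.reindex_bij_witness[of _ "map_prod prod.swap prod.swap" "map_prod prod.swap prod.swap"])
    (auto simp: mult_ac)

lemma mp_du_swap_vars: "mp_du (swap_vars g) = swap_vars (mp_dv g)"
  and mp_dv_swap_vars: "mp_dv (swap_vars g) = swap_vars (mp_du g)"
  and mp_dubar_swap_vars: "mp_dubar (swap_vars g) = swap_vars (mp_dvbar g)"
  and mp_dvbar_swap_vars: "mp_dvbar (swap_vars g) = swap_vars (mp_dubar g)"
  by (auto simp: fun_eq_iff swap_vars_def mp_du_def mp_dv_def mp_dubar_def mp_dvbar_def)

lemma crit_swap_vars: "z \<in> crit (swap_vars g) \<longleftrightarrow> prod.swap z \<in> crit g"
  unfolding crit_def
  by (simp add: mp_du_swap_vars mp_dv_swap_vars mp_dubar_swap_vars mp_dvbar_swap_vars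
      mp_eval_swap_vars) (auto simp: mult.commute)

lemma supp_swap_vars: "supp (swap_vars f) = prod.swap ` supp f"
  unfolding supp_def swap_vars_def by force

lemma linear_swap: "linear (prod.swap :: real \<times> real \<Rightarrow> real \<times> real)"
  by (auto intro!: linearI)

lemma newton_plus_swap_vars: "newton_plus (swap_vars f) = prod.swap ` newton_plus f"
proof -
  have "prod.swap ` (\<Union>w\<in>supp f. {x. real (fst w) \<le> fst x \<and> real (snd w) \<le> snd x})
      = (\<Union>w\<in>supp (swap_vars f). {x :: real \<times> real. real (fst w) \<le> fst x \<and> real (snd w) \<le> snd x})"
    unfolding supp_swap_vars by force
  then show ?thesis
    unfolding newton_plus_def convex_hull_linear_image[OF linear_swap] by simp
qed

lemma mem_swap_image_iff: "x \<in> prod.swap ` A \<longleftrightarrow> prod.swap x \<in> A"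
  by (auto intro: image_eqI[of x prod.swap "prod.swap x"])

lemma face_swap_vars: "face (swap_vars f) (prod.swap P) = prod.swap ` face f P"
  unfolding face_def newton_plus_swap_vars set_eq_iff mem_swap_image_iff
  by (auto simp: wdot_def add.commute mem_swap_image_iff ball_simps)

lemma weight_swap: "weight (prod.swap P) \<longleftrightarrow> weight P"
  by (auto simp: weight_def coprime_commute)

lemma edge_weight_swap_vars: "edge_weight (swap_vars f) (prod.swap P) \<longleftrightarrow> edge_weight f P"
  unfolding edge_weight_def face_swap_vars weight_swap by (fastforce simp: inj_eq)

lemma first_edge_swap_vars:
  assumes "last_edge f P"
  shows "first_edge (swap_vars f) (prod.swap P)"
  unfolding first_edge_def
proof (intro conjI allI impI)
  show "edge_weight (swap_vars f) (prod.swap P)"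
    using assms unfolding last_edge_def edge_weight_swap_vars by blast
  fix Q assume "edge_weight (swap_vars f) Q"
  then have Q: "edge_weight f (snd Q, fst Q)"
    using edge_weight_swap_vars[of f "(snd Q, fst Q)"] by simp
  then have "real (fst P) / real (snd P) \<le> real (snd Q) / real (fst Q)"
    using assms unfolding last_edge_def by fastforce
  moreover have "0 < fst P" "0 < snd P" "0 < fst Q" "0 < snd Q"
    using assms Q unfolding last_edge_def edge_weight_def weight_def by auto
  ultimately show "real (fst Q) / real (snd Q) \<le> real (fst (prod.swap P)) / real (snd (prod.swap P))"
    by (simp add: field_simps)
qed

lemma restr_swap_vars: "restr (swap_vars f) (prod.swap ` D) = swap_vars (restr f D)"
  by (auto simp: fun_eq_iff restr_def swap_vars_def image_iff add.commute)

lemma strongly_newton_nondeg_swap_vars: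
  assumes "strongly_newton_nondeg f"
  shows "strongly_newton_nondeg (swap_vars f)"
  unfolding strongly_newton_nondeg_def
proof (intro allI impI)
  fix D assume "compact_face (swap_vars f) D"
  then obtain P where P: "weight P" "D = face (swap_vars f) P" "D \<noteq> {}"
    unfolding compact_face_def by blast
  define D' where "D' = face f (prod.swap P)"
  have D: "D = prod.swap ` D'"
    unfolding P(2) D'_def by (metis face_swap_vars swap_swap)
  have "compact_face f D'"
    using P D weight_swap unfolding compact_face_def D'_def by blast
  then have "crit (restr f D') \<inter> torus2 = {}"
    using assms unfolding strongly_newton_nondeg_def by blast
  then show "crit (restr (swap_vars f) D) \<inter> torus2 = {}"
    unfolding D restr_swap_vars by (auto simp: crit_swap_vars torus2_def)
qed

lemma compact_face_edge: "edge_weight f P \<Longrightarrow> compact_face f (face f P)"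
  unfolding edge_weight_def compact_face_def by blast

lemma compact_face_nonextreme_vertex:
  assumes "nonextreme_vertex f w"
  shows "compact_face f {w}"
proof -
  obtain P Q where "weight P" "weight Q" "P \<noteq> Q" "w \<in> face f P" "w \<in> face f Q"
    using assms unfolding nonextreme_vertex_def edge_weight_def by blast
  then obtain R where "weight R" "face f R = {w}" by (rule face_meet_is_vertex)
  then show ?thesis unfolding compact_face_def by (metis insert_not_empty)
qed

lemma crit_first_edge:
  assumes fin: "finite {k. f k \<noteq> 0}" and nondeg: "strongly_newton_nondeg f"
    and axis: "(0, y) \<in> newton_plus f" and P: "first_edge f P"
  shows "crit (restr f (face f P)) \<inter> {z. snd z \<noteq> 0} = {}"
proof -
  obtain b where b: "v_axis_vertex f b" using v_axis_vertex_exists[OF axis] .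
  from compact_face_v_axis_vertex[OF b] have vertex: "crit (restr f {(0, real b)}) \<inter> torus2 = {}"
    using nondeg unfolding strongly_newton_nondeg_def by blast
  have "compact_face f (face f P)"
    using P unfolding first_edge_def by (blast intro: compact_face_edge)
  then have edge: "crit (restr f (face f P)) \<inter> torus2 = {}"
    using nondeg unfolding strongly_newton_nondeg_def by blast
  have u_free: "u_free_part (restr f (face f P)) = restr f {(0, real b)}"
    using u_free_part_restr first_edge_meets_v_axis[OF finite_supp[OF fin] P b] by metis
  have "z \<notin> crit (restr f (face f P))" if "snd z \<noteq> 0" for z
  proof (cases "fst z = 0")
    case True
    \<comment> \<open>On the v-axis only the terms of the vertex polynomial survive.\<close>
    have "(0, snd z) \<notin> crit (restr f (face f P))"
      using crit_u_free_part[OF finite_support_restr[OF fin, of "face f P"], of "snd z" 1] vertex that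
      unfolding u_free torus2_def by auto
    with True show ?thesis by (metis prod.collapse)
  next
    case False
    with that edge show ?thesis unfolding torus2_def by auto
  qed
  then show ?thesis by blast
qed

lemma crit_last_edge:
  assumes fin: "finite {k. f k \<noteq> 0}" and nondeg: "strongly_newton_nondeg f"
    and axis: "(y, 0) \<in> newton_plus f" and P: "last_edge f P"
  shows "crit (restr f (face f P)) \<inter> {z. fst z \<noteq> 0} = {}"
proof -
  have "(0, y) \<in> newton_plus (swap_vars f)"
    using axis unfolding newton_plus_swap_vars mem_swap_image_iff by simp
  from crit_first_edge[OF finite_support_swap_vars[OF fin]
      strongly_newton_nondeg_swap_vars[OF nondeg] this first_edge_swap_vars[OF P]]
  have swapped: "crit (swap_vars (restr f (face f P))) \<inter> {z. snd z \<noteq> 0} = {}"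
    unfolding face_swap_vars restr_swap_vars .
  have "z \<notin> crit (restr f (face f P))" if "fst z \<noteq> 0" for z
  proof -
    have "prod.swap z \<notin> crit (swap_vars (restr f (face f P)))"
      using swapped that by (cases z) auto
    then show ?thesis using crit_swap_vars[of "prod.swap z"] by simp
  qed
  then show ?thesis by blast
qed

theorem mainTheorem12:
  fixes f :: mpoly
  assumes "finite {k. f k \<noteq> 0}"
    and "\<exists>P. edge_weight f P"
    and "convenient f"
    and "strongly_newton_nondeg f"
  shows "strongly_inner_nondeg_boundary f"
proof -
  have faces_in_newton_plus: "D \<subseteq> newton_plus f" if "compact_face f D" for D
    using that unfolding compact_face_def face_def by auto
  obtain a b where "(real a, 0) \<in> newton_plus f" and "(0, real b) \<in> newton_plus f"
    using assms(3) faces_in_newton_plus unfolding convenient_def by blast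
  then show ?thesis
    unfolding strongly_inner_nondeg_boundary_def
    using crit_first_edge crit_last_edge compact_face_edge compact_face_nonextreme_vertex
      assms(1,4) unfolding strongly_newton_nondeg_def by blast
qed

end
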